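(* Let $\sigma$ be a partial action of a locally compact Hausdorff group $G$ on a locally compact Hausdorff space $X$, and let $\sigma^e$ be its enveloping action on the enveloping space $X^e$. The following are equivalent: (1) $X^e$ is locally compact Hausdorff and $\sigma^e$ is a proper action; (2) for every net $\{(t_i,x_i)\}_{i\in I}\subseteq\Gamma_\sigma$ such that $\{(\sigma_{t_i}(x_i),x_i)\}_{i\in I}$ converges to a point of $X\times X$, there is a subnet of $\{(t_i,x_i)\}_{i\in I}$ converging to a point of $\Gamma_\sigma$; (3) the map $F_\sigma\colon\Gamma_\sigma\to X\times X$, $F_\sigma(t,x)=(\sigma_t(x),x)$, is proper.
   Context: A topological partial action $\sigma=(\{X_t\},\{\sigma_t\})$: open $X_t\subseteq X$, homeomorphisms $\sigma_t\colon X_{t^{-1}}\to X_t$, $X_e=X$, $\sigma_e=\mathrm{id}$, $\sigma_s(X_{s^{-1}}\cap X_t)=X_s\cap X_{st}$, $\sigma_s\sigma_t=\sigma_{st}$ on $X_{t^{-1}}\cap X_{t^{-1}s^{-1}}$, with $\Gamma_\sigma:=\{(t,x)\in G\times X:x\in X_{t^{-1}}\}$ open and $(t,x)\mapsto\sigma_t(x)$ continuous on it. The enveloping action $\sigma^e$ is (up to isomorphism) a global action of $G$ on a topological space $X^e$ with $X$ open in $X^e$, $X_t=X\cap\sigma^e_t(X)$, $\sigma_t=\sigma^e_t$ on $X_{t^{-1}}$, and $X^e=\bigcup_t\sigma^e_t(X)$. A global action $\sigma^e$ is proper if $(t,x)\mapsto(\sigma^e_t(x),x)$, $G\times X^e\to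 X^e\times X^e$, is proper (preimages of compact sets compact). *)

theory Defs
  imports "HOL-Analysis.Analysis" "HOL-Algebra.Group"
begin

definition topological_group :: "('g,'b) monoid_scheme \<Rightarrow> 'g topology \<Rightarrow> bool" where
  "topological_group G TG \<longleftrightarrow> group G \<and> topspace TG = carrier G \<and>
     continuous_map (prod_topology TG TG) TG (\<lambda>(s,t). s \<otimes>\<^bsub>G\<^esub> t) \<and>
     continuous_map TG TG (\<lambda>t. inv\<^bsub>G\<^esub> t)"

definition Gamma_pa :: "('g,'b) monoid_scheme \<Rightarrow> ('g \<Rightarrow> 'x set) \<Rightarrow> ('g \<times> 'x) set" where
  "Gamma_pa G D = {(t,x). t \<in> carrier G \<and> x \<in> D (inv\<^bsub>G\<^esub> t)}"

text \<open>Topological partial action (D t = X_t, \<sigma> t = \<sigma>_t : X_(t^-1) \<rightarrow> X_t).\<close>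
definition partial_action ::
  "('g,'b) monoid_scheme \<Rightarrow> 'g topology \<Rightarrow> 'x topology \<Rightarrow> ('g \<Rightarrow> 'x set) \<Rightarrow> ('g \<Rightarrow> 'x \<Rightarrow> 'x) \<Rightarrow> bool" where
  "partial_action G TG TX D \<sigma> \<longleftrightarrow>
     (\<forall>t\<in>carrier G. openin TX (D t)) \<and>
     (\<forall>t\<in>carrier G. homeomorphic_map (subtopology TX (D (inv\<^bsub>G\<^esub> t))) (subtopology TX (D t)) (\<sigma> t)) \<and>
     D \<one>\<^bsub>G\<^esub> = topspace TX \<and>
     (\<forall>x\<in>topspace TX. \<sigma> \<one>\<^bsub>G\<^esub> x = x) \<and>
     (\<forall>s\<in>carrier G. \<forall>t\<in>carrier G.
        \<sigma> s ` (D (inv\<^bsub>G\<^esub> s) \<inter> D t) = D s \<inter> D (s \<otimes>\<^bsub>G\<^esub> t)) \<and>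
     (\<forall>s\<in>carrier G. \<forall>t\<in>carrier G.
        \<forall>x\<in>D (inv\<^bsub>G\<^esub> t) \<inter> D (inv\<^bsub>G\<^esub> t \<otimes>\<^bsub>G\<^esub> inv\<^bsub>G\<^esub> s).
          \<sigma> s (\<sigma> t x) = \<sigma> (s \<otimes>\<^bsub>G\<^esub> t) x) \<and>
     openin (prod_topology TG TX) (Gamma_pa G D) \<and>
     continuous_map (subtopology (prod_topology TG TX) (Gamma_pa G D)) TX (\<lambda>(t,x). \<sigma> t x)"

definition global_action ::
  "('g,'b) monoid_scheme \<Rightarrow> 'g topology \<Rightarrow> 'e topology \<Rightarrow> ('g \<Rightarrow> 'e \<Rightarrow> 'e) \<Rightarrow> bool" where
  "global_action G TG TE \<beta> \<longleftrightarrow>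
     (\<forall>t\<in>carrier G. \<forall>y\<in>topspace TE. \<beta> t y \<in> topspace TE) \<and>
     (\<forall>y\<in>topspace TE. \<beta> \<one>\<^bsub>G\<^esub> y = y) \<and>
     (\<forall>s\<in>carrier G. \<forall>t\<in>carrier G. \<forall>y\<in>topspace TE. \<beta> s (\<beta> t y) = \<beta> (s \<otimes>\<^bsub>G\<^esub> t) y) \<and>
     continuous_map (prod_topology TG TE) TE (\<lambda>(t,y). \<beta> t y)"

text \<open>These data determine the enveloping
  action up to isomorphism.\<close>
definition enveloping_action ::
  "('g,'b) monoid_scheme \<Rightarrow> 'g topology \<Rightarrow> 'x topology \<Rightarrow> ('g \<Rightarrow> 'x set) \<Rightarrow> ('g \<Rightarrow> 'x \<Rightarrow> 'x)
    \<Rightarrow> 'e topology \<Rightarrow> ('g \<Rightarrow> 'e \<Rightarrow> 'e) \<Rightarrow> ('x \<Rightarrow> 'e) \<Rightarrow> bool" where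
  "enveloping_action G TG TX D \<sigma> TE \<beta> \<iota> \<longleftrightarrow>
     global_action G TG TE \<beta> \<and>
     embedding_map TX TE \<iota> \<and> openin TE (\<iota> ` topspace TX) \<and>
     (\<forall>t\<in>carrier G. \<iota> ` D t = \<iota> ` topspace TX \<inter> \<beta> t ` (\<iota> ` topspace TX)) \<and>
     (\<forall>t\<in>carrier G. \<forall>x\<in>D (inv\<^bsub>G\<^esub> t). \<iota> (\<sigma> t x) = \<beta> t (\<iota> x)) \<and>
     topspace TE = (\<Union>t\<in>carrier G. \<beta> t ` (\<iota> ` topspace TX))"

text \<open>Proper map in the sense of the paper: preimages of compact sets are compact.\<close>
definition compact_preimage_map :: "'a topology \<Rightarrow> 'b topology \<Rightarrow> ('a \<Rightarrow> 'b) \<Rightarrow> bool" where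
  "compact_preimage_map S T f \<longleftrightarrow>
     (\<forall>K. compactin T K \<longrightarrow> compactin S {z \<in> topspace S. f z \<in> K})"

definition proper_action ::
  "('g,'b) monoid_scheme \<Rightarrow> 'g topology \<Rightarrow> 'e topology \<Rightarrow> ('g \<Rightarrow> 'e \<Rightarrow> 'e) \<Rightarrow> bool" where
  "proper_action G TG TE \<beta> \<longleftrightarrow>
     compact_preimage_map (prod_topology TG TE) (prod_topology TE TE) (\<lambda>(t,y). (\<beta> t y, y))"

end

theory Submission
  imports Defs
begin

(*
  Nets are modelled by proper filters, subnets by finer proper filters.  Then (2) <-> (3) is the
  filter characterisation of maps with compact preimages into the locally compact Hausdorff
  space X x X.

  (1) -> (3): via the embedding of X into X^e, the preimage of K under F_sigma is the preimage of
  (iota x iota)(K) under (t, e) |-> (sigma^e_t e, e).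

  (3) -> (1): X^e is covered by the open translates of X, hence locally compact.  Since F_sigma
  is a closed map, the graph of each sigma_r, the image of {r} x X_(r^-1), is closed in X x X;
  as any two points of X^e can be translated to iota x and sigma^e_r (iota y), this makes X^e
  Hausdorff.  Finally the preimage of a box sigma^e_r(iota C1) x sigma^e_s(iota C2) under the
  action map is the image of the compact set F_sigma^-1(C1 x C2) under
  (u, x) |-> (r u s^-1, sigma^e_s (iota x)), and every compact subset of X^e x X^e lies in
  finitely many such boxes.
*)


(* Condition (2) of the theorem, with a subnet rendered as a finer proper filter. *)
definition filter_proper_map :: "'a topology \<Rightarrow> 'b topology \<Rightarrow> ('a \<Rightarrow> 'b) \<Rightarrow> bool" where
  "filter_proper_map S T f \<longleftrightarrow>
     (\<forall>F. F \<noteq> bot \<and> eventually (\<lambda>z. z \<in> topspace S) F \<and> (\<exists>p. limitin T f p F)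
        \<longrightarrow> (\<exists>F'. F' \<noteq> bot \<and> F' \<le> F \<and> (\<exists>q. limitin S (\<lambda>z. z) q F')))"

lemma filter_proper_mapD:
  assumes "filter_proper_map S T f" "F \<noteq> bot" "eventually (\<lambda>z. z \<in> topspace S) F"
    and "limitin T f p F"
  obtains F' q where "F' \<noteq> bot" "F' \<le> F" "limitin S (\<lambda>z. z) q F'"
  using assms unfolding filter_proper_map_def by blast

lemma limitin_iff_filtermap_le_nhdsin:
  "limitin X f l F \<longleftrightarrow> l \<in> topspace X \<and> filtermap f F \<le> nhdsin X l"
proof safe
  assume lim: "limitin X f l F"
  then show "l \<in> topspace X"
    by (rule limitin_topspace)
  show "filtermap f F \<le> nhdsin X l"
  proof (rule filter_leI)
    fix P assume "eventually P (nhdsin X l)"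
    then obtain S where "openin X S" "l \<in> S" "\<forall>x\<in>S. P x"
      using \<open>l \<in> topspace X\<close> unfolding eventually_nhdsin by blast
    with lim have "eventually (\<lambda>x. f x \<in> S) F"
      by (simp add: limitinD)
    with \<open>\<forall>x\<in>S. P x\<close> show "eventually P (filtermap f F)"
      unfolding eventually_filtermap by (auto elim: eventually_mono)
  qed
next
  assume l: "l \<in> topspace X" and le: "filtermap f F \<le> nhdsin X l"
  show "limitin X f l F"
    unfolding limitin_def
  proof (intro conjI allI impI l)
    fix U assume "openin X U \<and> l \<in> U"
    then have "eventually (\<lambda>x. x \<in> U) (nhdsin X l)"
      unfolding eventually_nhdsin by blast
    from filter_leD[OF le this] show "eventually (\<lambda>x. f x \<in> U) F"
      by (simp add: eventually_filtermap)
  qed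
qed

lemma nhdsin_inf_ne_bot_iff:
  assumes "a \<in> topspace X"
  shows "inf (nhdsin X a) F \<noteq> bot \<longleftrightarrow> (\<exists>F'. F' \<noteq> bot \<and> F' \<le> F \<and> limitin X (\<lambda>z. z) a F')"
proof
  assume "inf (nhdsin X a) F \<noteq> bot"
  moreover have "limitin X (\<lambda>z. z) a (inf (nhdsin X a) F)"
    unfolding limitin_iff_filtermap_le_nhdsin filtermap_ident by (intro conjI assms inf_le1)
  moreover have "inf (nhdsin X a) F \<le> F"
    by (rule inf_le2)
  ultimately show "\<exists>F'. F' \<noteq> bot \<and> F' \<le> F \<and> limitin X (\<lambda>z. z) a F'"
    by blast
next
  assume "\<exists>F'. F' \<noteq> bot \<and> F' \<le> F \<and> limitin X (\<lambda>z. z) a F'"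
  then obtain F' where F': "F' \<noteq> bot" "F' \<le> F" "limitin X (\<lambda>z. z) a F'"
    by blast
  then have "F' \<le> inf (nhdsin X a) F"
    unfolding limitin_iff_filtermap_le_nhdsin filtermap_ident by simp
  with F'(1) show "inf (nhdsin X a) F \<noteq> bot"
    by (metis le_bot)
qed

lemma inf_filtercomap_ne_bot:
  assumes "inf G (filtermap f F) \<noteq> bot"
  shows "inf F (filtercomap f G) \<noteq> bot"
proof
  assume "inf F (filtercomap f G) = bot"
  then obtain P Q0 where P: "eventually P F" and Q0: "eventually Q0 (filtercomap f G)"
    and PQ0: "\<And>z. P z \<Longrightarrow> Q0 z \<Longrightarrow> False"
    unfolding trivial_limit_def eventually_inf by blast
  from Q0 obtain Q where Q: "eventually Q G" and QQ0: "\<And>x. Q (f x) \<Longrightarrow> Q0 x"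
    unfolding eventually_filtercomap by blast
  have "eventually (\<lambda>y. \<not> Q y) (filtermap f F)"
    unfolding eventually_filtermap using P by (rule eventually_mono) (use PQ0 QQ0 in blast)
  with Q have "eventually (\<lambda>_. False) (inf G (filtermap f F))"
    unfolding eventually_inf by blast
  with assms show False
    by (simp add: trivial_limit_def)
qed

lemma compactin_filterD:
  assumes "compactin X C" "F \<noteq> bot" "eventually (\<lambda>x. x \<in> C) F"
  shows "\<exists>x\<in>C. inf (nhdsin X x) F \<noteq> bot"
proof -
  define Cl where "Cl = (\<lambda>A. X closure_of A) ` {A. eventually (\<lambda>x. x \<in> A) F}"
  have C: "C \<subseteq> topspace X"
    using assms(1) by (rule compactin_subset_topspace)
  have "C \<inter> \<Inter>\<B> \<noteq> {}" if "finite \<B>" "\<B> \<subseteq> Cl" for \<B>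
  proof -
    have "eventually (\<lambda>x. x \<in> C \<longrightarrow> x \<in> Z) F" if "Z \<in> Cl" for Z
      using that C unfolding Cl_def by (auto elim!: eventually_mono simp: in_closure_of)
    with \<open>finite \<B>\<close> \<open>\<B> \<subseteq> Cl\<close> have "eventually (\<lambda>x. \<forall>Z\<in>\<B>. x \<in> C \<longrightarrow> x \<in> Z) F"
      by (intro eventually_ball_finite) auto
    with assms(3) have ev: "eventually (\<lambda>x. x \<in> C \<inter> \<Inter>\<B>) F"
      by (rule eventually_elim2) auto
    show ?thesis
    proof
      assume "C \<inter> \<Inter>\<B> = {}"
      with ev have "eventually (\<lambda>_. False) F"
        by (metis empty_iff eventually_mono)
      with assms(2) show False
        by (simp add: trivial_limit_def)
    qed
  qed
  moreover have "\<forall>Z\<in>Cl. closedin X Z"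
    unfolding Cl_def by simp
  ultimately have "C \<inter> \<Inter>Cl \<noteq> {}"
    using assms(1) unfolding compactin_fip by blast
  then obtain x where x: "x \<in> C" "\<And>Z. Z \<in> Cl \<Longrightarrow> x \<in> Z"
    by auto
  have "inf (nhdsin X x) F \<noteq> bot"
  proof
    assume "inf (nhdsin X x) F = bot"
    then obtain Q R where Q: "eventually Q (nhdsin X x)" and R: "eventually R F"
      and QR: "\<And>y. Q y \<Longrightarrow> R y \<Longrightarrow> False"
      unfolding trivial_limit_def eventually_inf by blast
    from Q x(1) C obtain S where S: "openin X S" "x \<in> S" "\<forall>y\<in>S. Q y"
      unfolding eventually_nhdsin by blast
    have "x \<in> X closure_of {y. R y}"
      using R by (intro x(2)) (auto simp: Cl_def)
    with S QR show False
      unfolding in_closure_of by blast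
  qed
  with x(1) show ?thesis
    by blast
qed

lemma compactin_filterI:
  assumes "C \<subseteq> topspace X"
    and cluster: "\<And>F. F \<noteq> bot \<Longrightarrow> eventually (\<lambda>x. x \<in> C) F \<Longrightarrow> \<exists>x\<in>C. inf (nhdsin X x) F \<noteq> bot"
  shows "compactin X C"
  unfolding compactin_fip
proof (intro conjI assms allI impI)
  fix \<A> assume \<A>: "(\<forall>A\<in>\<A>. closedin X A) \<and> (\<forall>\<B>. finite \<B> \<and> \<B> \<subseteq> \<A> \<longrightarrow> C \<inter> \<Inter>\<B> \<noteq> {})"
  define F where "F = (INF A\<in>insert C \<A>. principal A)"
  have "F \<noteq> bot"
    unfolding F_def
  proof (rule INF_filter_not_bot)
    fix \<B> assume "\<B> \<subseteq> insert C \<A>" "finite \<B>"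
    moreover from this \<A> have "C \<inter> \<Inter>(\<B> - {C}) \<noteq> {}"
      by auto
    ultimately show "(INF A\<in>\<B>. principal A) \<noteq> bot"
      by (auto simp: INF_principal_finite principal_eq_bot_iff)
  qed
  have ev: "eventually (\<lambda>x. x \<in> A) F" if "A \<in> insert C \<A>" for A
    unfolding F_def le_principal[symmetric] by (rule INF_lower[OF that])
  obtain x where x: "x \<in> C" "inf (nhdsin X x) F \<noteq> bot"
    using cluster[OF \<open>F \<noteq> bot\<close> ev] by blast
  have "x \<in> A" if "A \<in> \<A>" for A
  proof (rule ccontr)
    assume "x \<notin> A"
    with x(1) assms(1) \<A> that have "eventually (\<lambda>y. y \<in> topspace X - A) (nhdsin X x)"
      unfolding eventually_nhdsin by (metis Diff_iff closedin_def subsetD)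
    with ev[of A] that have "eventually (\<lambda>_. False) (inf (nhdsin X x) F)"
      unfolding eventually_inf by blast
    with x(2) show False
      by (simp add: trivial_limit_def)
  qed
  with x(1) show "C \<inter> \<Inter>\<A> \<noteq> {}"
    by blast
qed

lemma compact_preimage_imp_filter_proper_map:
  assumes T: "locally_compact_space T" and f: "compact_preimage_map S T f"
  shows "filter_proper_map S T f"
  unfolding filter_proper_map_def
proof (intro allI impI, elim conjE exE)
  fix F p
  assume F: "F \<noteq> bot" "eventually (\<lambda>z. z \<in> topspace S) F" and p: "limitin T f p F"
  obtain U K where UK: "openin T U" "compactin T K" "p \<in> U" "U \<subseteq> K"
    using T limitin_topspace[OF p] unfolding locally_compact_space_def by blast
  have "eventually (\<lambda>z. f z \<in> U) F"
    using p UK(1,3) by (rule limitinD)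
  with F(2) have "eventually (\<lambda>z. z \<in> {z \<in> topspace S. f z \<in> K}) F"
    by (rule eventually_elim2) (use UK(4) in blast)
  moreover have "compactin S {z \<in> topspace S. f z \<in> K}"
    using f UK(2) unfolding compact_preimage_map_def by blast
  ultimately obtain q where q: "q \<in> topspace S" "inf (nhdsin S q) F \<noteq> bot"
    using compactin_filterD[OF _ F(1)] by blast
  then show "\<exists>F'. F' \<noteq> bot \<and> F' \<le> F \<and> (\<exists>q. limitin S (\<lambda>z. z) q F')"
    unfolding nhdsin_inf_ne_bot_iff[OF q(1)] by blast
qed

lemma filter_proper_imp_compact_preimage_map:
  assumes T: "Hausdorff_space T" and f: "continuous_map S T f" and proper: "filter_proper_map S T f"
  shows "compact_preimage_map S T f"
  unfolding compact_preimage_map_def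
proof (intro allI impI)
  fix K assume K: "compactin T K"
  show "compactin S {z \<in> topspace S. f z \<in> K}"
  proof (rule compactin_filterI)
    fix F assume F: "F \<noteq> bot" "eventually (\<lambda>z. z \<in> {z \<in> topspace S. f z \<in> K}) F"
    have "filtermap f F \<noteq> bot"
      using F(1) by (simp add: filtermap_bot_iff)
    moreover have "eventually (\<lambda>y. y \<in> K) (filtermap f F)"
      unfolding eventually_filtermap using F(2) by (rule eventually_mono) simp
    ultimately obtain p where p: "p \<in> K" "inf (nhdsin T p) (filtermap f F) \<noteq> bot"
      using compactin_filterD[OF K] by metis
    define F1 where "F1 = inf F (filtercomap f (nhdsin T p))"
    have "p \<in> topspace T"
      using p(1) compactin_subset_topspace[OF K] by blast
    then have "limitin T f p F1"
      unfolding limitin_iff_filtermap_le_nhdsin filtermap_le_iff_le_filtercomap F1_def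
      by (intro conjI inf_le2)
    moreover have "F1 \<noteq> bot"
      unfolding F1_def using p(2) by (rule inf_filtercomap_ne_bot)
    moreover have "eventually (\<lambda>z. z \<in> topspace S) F"
      using F(2) by (rule eventually_mono) simp
    then have "eventually (\<lambda>z. z \<in> topspace S) F1"
      unfolding F1_def by (rule filter_leD[OF inf_le1])
    ultimately obtain F' q where F': "F' \<noteq> bot" "F' \<le> F1" "limitin S (\<lambda>z. z) q F'"
      using filter_proper_mapD[OF proper] by metis
    have "limitin T f (f q) F'"
      using continuous_map_limit[OF f F'(3)] by (simp add: o_def)
    moreover have "limitin T f p F'"
      using \<open>limitin T f p F1\<close> F'(2)
      by (meson limitin_iff_filtermap_le_nhdsin filtermap_mono order_trans)
    ultimately have "f q = p"
      using F'(1) T by (rule limitin_Hausdorff_unique)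
    moreover have "q \<in> topspace S"
      using F'(3) by (rule limitin_topspace)
    moreover have "F' \<le> F"
      using F'(2) unfolding F1_def by simp
    then have "inf (nhdsin S q) F \<noteq> bot"
      using nhdsin_inf_ne_bot_iff[OF \<open>q \<in> topspace S\<close>] F'(1,3) by blast
    ultimately show "\<exists>q\<in>{z \<in> topspace S. f z \<in> K}. inf (nhdsin S q) F \<noteq> bot"
      using p(1) by blast
  qed auto
qed

lemma filter_proper_map_iff_compact_preimage_map:
  assumes "locally_compact_space T" "Hausdorff_space T" "continuous_map S T f"
  shows "filter_proper_map S T f \<longleftrightarrow> compact_preimage_map S T f"
  using assms compact_preimage_imp_filter_proper_map filter_proper_imp_compact_preimage_map by metis

lemma compact_preimage_imp_closed_map:
  assumes "locally_compact_space T" "Hausdorff_space T" "continuous_map S T f"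
    and "compact_preimage_map S T f"
  shows "closed_map S T f"
proof (rule proper_imp_closed_map, rule compact_imp_proper_map)
  show "k_space T" "kc_space T"
    using assms(1,2) by (simp_all add: locally_compact_imp_k_space Hausdorff_imp_kc_space)
  show "f \<in> topspace S \<rightarrow> topspace T"
    using assms(3) by (rule continuous_map_funspace)
  show "continuous_map S T f \<or> kc_space S"
    using assms(3) ..
  show "compactin S {x \<in> topspace S. f x \<in> K}" if "compactin T K" for K
    using assms(4) that unfolding compact_preimage_map_def by blast
qed

locale envelope =
  fixes G :: "('g,'b) monoid_scheme" and TG :: "'g topology"
    and TX :: "'x topology" and D :: "'g \<Rightarrow> 'x set" and \<sigma> :: "'g \<Rightarrow> 'x \<Rightarrow> 'x"
    and TE :: "'e topology" and \<beta> :: "'g \<Rightarrow> 'e \<Rightarrow> 'e" and \<iota> :: "'x \<Rightarrow> 'e"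
  assumes topological_group: "topological_group G TG"
    and partial_action: "partial_action G TG TX D \<sigma>"
    and enveloping_action: "enveloping_action G TG TX D \<sigma> TE \<beta> \<iota>"
begin

sublocale group G
  using topological_group by (simp add: topological_group_def)

lemma topspace_TG: "topspace TG = carrier G"
  using topological_group by (simp add: topological_group_def)

lemma continuous_map_group_mult:
  assumes "continuous_map X TG f" "continuous_map X TG g"
  shows "continuous_map X TG (\<lambda>x. f x \<otimes>\<^bsub>G\<^esub> g x)"
proof -
  have "continuous_map (prod_topology TG TG) TG (\<lambda>(s,t). s \<otimes>\<^bsub>G\<^esub> t)"
    using topological_group by (simp add: topological_group_def)
  from continuous_map_compose[OF continuous_map_pairedI[OF assms] this] show ?thesis
    by (simp add: o_def)
qed

lemma continuous_map_two_sided_translation: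
  assumes "r \<in> carrier G" "s \<in> carrier G"
  shows "continuous_map TG TG (\<lambda>u. r \<otimes>\<^bsub>G\<^esub> u \<otimes>\<^bsub>G\<^esub> s)"
  using assms
  by (intro continuous_map_group_mult continuous_map_id[unfolded id_def]) (simp_all add: topspace_TG)

abbreviation "\<Gamma> \<equiv> Gamma_pa G D"

lemma mem_Gamma_iff: "(t, x) \<in> \<Gamma> \<longleftrightarrow> t \<in> carrier G \<and> x \<in> D (inv\<^bsub>G\<^esub> t)"
  by (simp add: Gamma_pa_def)

lemma D_subset_topspace: "t \<in> carrier G \<Longrightarrow> D t \<subseteq> topspace TX"
  using partial_action by (simp add: partial_action_def openin_subset)

lemma topspace_Gamma: "topspace (subtopology (prod_topology TG TX) \<Gamma>) = \<Gamma>"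
  using D_subset_topspace by (auto simp: Gamma_pa_def topspace_TG)

lemma continuous_map_sigma_pair:
  "continuous_map (subtopology (prod_topology TG TX) \<Gamma>) (prod_topology TX TX) (\<lambda>(t,x). (\<sigma> t x, x))"
proof -
  have "continuous_map (subtopology (prod_topology TG TX) \<Gamma>) TX (\<lambda>(t,x). \<sigma> t x)"
    using partial_action by (simp add: partial_action_def)
  moreover have "continuous_map (subtopology (prod_topology TG TX) \<Gamma>) TX snd"
    by (rule continuous_map_from_subtopology[OF continuous_map_snd])
  ultimately show ?thesis
    by (auto dest: continuous_map_pairedI simp: case_prod_beta')
qed

lemma sigma_in_topspace: "(t, x) \<in> \<Gamma> \<Longrightarrow> \<sigma> t x \<in> topspace TX"
  using continuous_map_image_subset_topspace[OF continuous_map_sigma_pair] topspace_Gamma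
  by fastforce

lemma global_action: "global_action G TG TE \<beta>"
  using enveloping_action by (simp add: enveloping_action_def)

lemma beta_in_topspace: "t \<in> carrier G \<Longrightarrow> e \<in> topspace TE \<Longrightarrow> \<beta> t e \<in> topspace TE"
  using global_action by (simp add: global_action_def)

lemma beta_mult:
  "s \<in> carrier G \<Longrightarrow> t \<in> carrier G \<Longrightarrow> e \<in> topspace TE \<Longrightarrow> \<beta> s (\<beta> t e) = \<beta> (s \<otimes>\<^bsub>G\<^esub> t) e"
  using global_action by (simp add: global_action_def)

lemma beta_inv_cancel:
  assumes "t \<in> carrier G" "e \<in> topspace TE"
  shows "\<beta> (inv\<^bsub>G\<^esub> t) (\<beta> t e) = e" "\<beta> t (\<beta> (inv\<^bsub>G\<^esub> t) e) = e"
  using assms global_action by (simp_all add: beta_mult global_action_def)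

lemma continuous_map_beta: "continuous_map (prod_topology TG TE) TE (\<lambda>(t,e). \<beta> t e)"
  using global_action by (simp add: global_action_def)

lemma continuous_map_beta_at: "t \<in> carrier G \<Longrightarrow> continuous_map TE TE (\<beta> t)"
  using continuous_map_compose[OF continuous_map_pairedI continuous_map_beta, of TE "\<lambda>_. t" id]
  by (simp add: o_def topspace_TG)

lemma homeomorphic_map_beta: "t \<in> carrier G \<Longrightarrow> homeomorphic_map TE TE (\<beta> t)"
  unfolding homeomorphic_map_maps homeomorphic_maps_def
  by (metis beta_inv_cancel continuous_map_beta_at inv_closed)

lemma openin_beta_image: "t \<in> carrier G \<Longrightarrow> openin TE W \<Longrightarrow> openin TE (\<beta> t ` W)"
  using homeomorphic_map_openness_eq homeomorphic_map_beta by blast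

lemma beta_inv_eq_iff:
  assumes "t \<in> carrier G" "e \<in> topspace TE" "e' \<in> topspace TE"
  shows "\<beta> (inv\<^bsub>G\<^esub> t) e = e' \<longleftrightarrow> e = \<beta> t e'"
  using assms beta_inv_cancel by metis

lemma embedding_iota: "embedding_map TX TE \<iota>"
  using enveloping_action by (simp add: enveloping_action_def)

lemma openin_iota_topspace: "openin TE (\<iota> ` topspace TX)"
  using enveloping_action by (simp add: enveloping_action_def)

lemma iota_D: "t \<in> carrier G \<Longrightarrow> \<iota> ` D t = \<iota> ` topspace TX \<inter> \<beta> t ` \<iota> ` topspace TX"
  using enveloping_action by (simp add: enveloping_action_def)

lemma iota_sigma: "t \<in> carrier G \<Longrightarrow> x \<in> D (inv\<^bsub>G\<^esub> t) \<Longrightarrow> \<iota> (\<sigma> t x) = \<beta> t (\<iota> x)"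
  using enveloping_action by (simp add: enveloping_action_def)

lemma envelope_cover:
  assumes "e \<in> topspace TE"
  obtains s x where "s \<in> carrier G" "x \<in> topspace TX" "e = \<beta> s (\<iota> x)"
proof -
  have "topspace TE = (\<Union>t\<in>carrier G. \<beta> t ` \<iota> ` topspace TX)"
    using enveloping_action by (simp add: enveloping_action_def)
  with assms that show thesis
    by blast
qed

lemma inj_on_iota: "inj_on \<iota> (topspace TX)"
  using embedding_iota unfolding embedding_map_def homeomorphic_map_def by blast

lemma iota_in_topspace: "x \<in> topspace TX \<Longrightarrow> \<iota> x \<in> topspace TE"
  using openin_subset[OF openin_iota_topspace] by blast

lemma continuous_map_iota: "continuous_map TX TE \<iota>"
  using homeomorphic_imp_continuous_map[OF embedding_iota[unfolded embedding_map_def]]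
  by (simp add: continuous_map_in_subtopology)

lemma openin_iota_image: "openin TX A \<Longrightarrow> openin TE (\<iota> ` A)"
  using homeomorphic_imp_open_map[OF embedding_iota[unfolded embedding_map_def]]
    openin_iota_topspace openin_trans_full unfolding open_map_def by blast

lemma beta_iota_eq_iota_iff:
  assumes t: "t \<in> carrier G" and a: "a \<in> topspace TX" and b: "b \<in> topspace TX"
  shows "\<beta> t (\<iota> b) = \<iota> a \<longleftrightarrow> b \<in> D (inv\<^bsub>G\<^esub> t) \<and> \<sigma> t b = a"
proof
  assume eq: "\<beta> t (\<iota> b) = \<iota> a"
  have "\<iota> b = \<beta> (inv\<^bsub>G\<^esub> t) (\<iota> a)"
    using beta_inv_cancel(1)[OF t iota_in_topspace[OF b]] eq by simp
  with a b have "\<iota> b \<in> \<iota> ` topspace TX \<inter> \<beta> (inv\<^bsub>G\<^esub> t) ` \<iota> ` topspace TX"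
    by blast
  then obtain d where d: "d \<in> D (inv\<^bsub>G\<^esub> t)" "\<iota> d = \<iota> b"
    unfolding iota_D[OF inv_closed[OF t], symmetric] by (metis imageE)
  moreover have "d \<in> topspace TX"
    using d(1) D_subset_topspace[OF inv_closed[OF t]] by blast
  ultimately have bD: "b \<in> D (inv\<^bsub>G\<^esub> t)"
    using inj_onD[OF inj_on_iota _ _ b] by metis
  have "\<iota> (\<sigma> t b) = \<iota> a"
    using iota_sigma[OF t bD] eq by simp
  moreover have "\<sigma> t b \<in> topspace TX"
    using t bD by (simp add: sigma_in_topspace mem_Gamma_iff)
  ultimately have "\<sigma> t b = a"
    using inj_onD[OF inj_on_iota _ _ a] by blast
  with bD show "b \<in> D (inv\<^bsub>G\<^esub> t) \<and> \<sigma> t b = a"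
    by blast
next
  assume "b \<in> D (inv\<^bsub>G\<^esub> t) \<and> \<sigma> t b = a"
  then show "\<beta> t (\<iota> b) = \<iota> a"
    using iota_sigma[OF t] by metis
qed

lemma envelope_compact_neighbourhood:
  assumes "locally_compact_space TX" "e \<in> topspace TE"
  obtains r U C where "r \<in> carrier G" "openin TX U" "compactin TX C" "U \<subseteq> C"
    "e \<in> \<beta> r ` \<iota> ` U"
proof -
  obtain r x where r: "r \<in> carrier G" "x \<in> topspace TX" "e = \<beta> r (\<iota> x)"
    using envelope_cover[OF assms(2)] .
  moreover obtain U C where "openin TX U" "compactin TX C" "x \<in> U" "U \<subseteq> C"
    using assms(1) r(2) unfolding locally_compact_space_def by blast
  ultimately show thesis
    using that by blast
qed

lemma compactin_beta_iota_image:
  assumes "r \<in> carrier G" "compactin TX C"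
  shows "compactin TE (\<beta> r ` \<iota> ` C)"
  using image_compactin[OF assms(2) continuous_map_compose[OF continuous_map_iota
      continuous_map_beta_at[OF assms(1)]]]
  by (simp add: image_comp)

lemma locally_compact_envelope:
  assumes "locally_compact_space TX"
  shows "locally_compact_space TE"
  unfolding locally_compact_space_def
proof
  fix e assume "e \<in> topspace TE"
  then obtain r U C where "r \<in> carrier G" "openin TX U" "compactin TX C" "U \<subseteq> C"
    "e \<in> \<beta> r ` \<iota> ` U"
    using envelope_compact_neighbourhood[OF assms] by metis
  then show "\<exists>U K. openin TE U \<and> compactin TE K \<and> e \<in> U \<and> U \<subseteq> K"
    by (intro exI[of _ "\<beta> r ` \<iota> ` U"] exI[of _ "\<beta> r ` \<iota> ` C"] conjI image_mono
        openin_beta_image openin_iota_image compactin_beta_iota_image)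
qed

lemma Hausdorff_envelope:
  assumes closed_graph:
    "\<And>r. r \<in> carrier G \<Longrightarrow> closedin (prod_topology TX TX) ((\<lambda>y. (\<sigma> r y, y)) ` D (inv\<^bsub>G\<^esub> r))"
  shows "Hausdorff_space TE"
  unfolding Hausdorff_space_def
proof (intro allI impI, elim conjE)
  fix e1 e2 assume e: "e1 \<in> topspace TE" "e2 \<in> topspace TE" "e1 \<noteq> e2"
  obtain s x where s: "s \<in> carrier G" "x \<in> topspace TX" "e1 = \<beta> s (\<iota> x)"
    using envelope_cover[OF e(1)] .
  obtain s' y where s': "s' \<in> carrier G" "y \<in> topspace TX" "e2 = \<beta> s' (\<iota> y)"
    using envelope_cover[OF e(2)] .
  define r where "r = inv\<^bsub>G\<^esub> s \<otimes>\<^bsub>G\<^esub> s'"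
  have r: "r \<in> carrier G"
    using s(1) s'(1) by (simp add: r_def)
  have relative: "\<beta> r (\<iota> y') = \<iota> x' \<longleftrightarrow> \<beta> s' (\<iota> y') = \<beta> s (\<iota> x')"
    if "x' \<in> topspace TX" "y' \<in> topspace TX" for x' y'
  proof -
    have "\<beta> r (\<iota> y') = \<beta> (inv\<^bsub>G\<^esub> s) (\<beta> s' (\<iota> y'))"
      using s(1) s'(1) that(2) by (simp add: r_def beta_mult iota_in_topspace)
    then show ?thesis
      using s(1) s'(1) that by (simp add: beta_inv_eq_iff beta_in_topspace iota_in_topspace)
  qed
  define graph where "graph = (\<lambda>y. (\<sigma> r y, y)) ` D (inv\<^bsub>G\<^esub> r)"
  have graph_iff: "(x', y') \<in> graph \<longleftrightarrow> \<beta> s' (\<iota> y') = \<beta> s (\<iota> x')"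
    if "x' \<in> topspace TX" "y' \<in> topspace TX" for x' y'
  proof -
    have "(x', y') \<in> graph \<longleftrightarrow> y' \<in> D (inv\<^bsub>G\<^esub> r) \<and> \<sigma> r y' = x'"
      by (auto simp: graph_def)
    also have "\<dots> \<longleftrightarrow> \<beta> r (\<iota> y') = \<iota> x'"
      by (rule beta_iota_eq_iota_iff[OF r that, symmetric])
    finally show ?thesis
      using relative[OF that] by simp
  qed
  have "(x, y) \<notin> graph"
    using graph_iff[OF s(2) s'(2)] s(3) s'(3) e(3) by simp
  then have xy: "(x, y) \<in> topspace (prod_topology TX TX) - graph"
    using s(2) s'(2) by simp
  have "openin (prod_topology TX TX) (topspace (prod_topology TX TX) - graph)"
    using closed_graph[OF r] by (simp add: closedin_def graph_def)
  from openin_prod_topology_alt[THEN iffD1, OF this, rule_format, OF xy]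
  obtain A B where AB: "openin TX A" "openin TX B" "x \<in> A" "y \<in> B"
    "A \<times> B \<subseteq> topspace (prod_topology TX TX) - graph"
    by blast
  have "disjnt (\<beta> s ` \<iota> ` A) (\<beta> s' ` \<iota> ` B)"
    unfolding disjnt_iff
  proof (intro allI notI, elim conjE)
    fix e assume "e \<in> \<beta> s ` \<iota> ` A" "e \<in> \<beta> s' ` \<iota> ` B"
    then obtain x' y' where xy': "x' \<in> A" "y' \<in> B" "\<beta> s' (\<iota> y') = \<beta> s (\<iota> x')"
      by auto
    moreover have "x' \<in> topspace TX" "y' \<in> topspace TX"
      using xy'(1,2) AB(1,2) openin_subset by blast+
    ultimately have "(x', y') \<in> graph \<inter> A \<times> B"
      using graph_iff by simp
    with AB(5) show False
      by blast
  qed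
  moreover have "e1 \<in> \<beta> s ` \<iota> ` A" "e2 \<in> \<beta> s' ` \<iota> ` B"
    using s(3) s'(3) AB(3,4) by auto
  moreover have "openin TE (\<beta> s ` \<iota> ` A)" "openin TE (\<beta> s' ` \<iota> ` B)"
    using AB(1,2) s(1) s'(1) by (simp_all add: openin_beta_image openin_iota_image)
  ultimately show "\<exists>U V. openin TE U \<and> openin TE V \<and> e1 \<in> U \<and> e2 \<in> V \<and> disjnt U V"
    by blast
qed

lemma closedin_sigma_graph:
  assumes "Hausdorff_space TG" "locally_compact_space TX" "Hausdorff_space TX"
    and proper: "compact_preimage_map (subtopology (prod_topology TG TX) \<Gamma>) (prod_topology TX TX)
                   (\<lambda>(t,x). (\<sigma> t x, x))"
    and r: "r \<in> carrier G"
  shows "closedin (prod_topology TX TX) ((\<lambda>y. (\<sigma> r y, y)) ` D (inv\<^bsub>G\<^esub> r))"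
proof -
  have "closed_map (subtopology (prod_topology TG TX) \<Gamma>) (prod_topology TX TX) (\<lambda>(t,x). (\<sigma> t x, x))"
    using assms(2,3) proper continuous_map_sigma_pair
    by (intro compact_preimage_imp_closed_map)
      (simp_all add: locally_compact_space_prod_topology Hausdorff_space_prod_topology)
  moreover have "closedin (prod_topology TG TX) ({r} \<times> topspace TX)"
    using assms(1) r by (simp add: closedin_prod_Times_iff closedin_Hausdorff_singleton topspace_TG)
  then have "closedin (subtopology (prod_topology TG TX) \<Gamma>) ({r} \<times> topspace TX \<inter> \<Gamma>)"
    unfolding closedin_subtopology by blast
  moreover have "(\<lambda>(t,x). (\<sigma> t x, x)) ` ({r} \<times> topspace TX \<inter> \<Gamma>) = (\<lambda>y. (\<sigma> r y, y)) ` D (inv\<^bsub>G\<^esub> r)"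
    using r D_subset_topspace[OF inv_closed[OF r]] by (auto simp: mem_Gamma_iff)
  ultimately show ?thesis
    unfolding closed_map_def by force
qed

lemma compactin_beta_pair_preimage:
  assumes proper: "compact_preimage_map (subtopology (prod_topology TG TX) \<Gamma>) (prod_topology TX TX)
                     (\<lambda>(t,x). (\<sigma> t x, x))"
    and r: "r \<in> carrier G" and s: "s \<in> carrier G"
    and C1: "compactin TX C1" and C2: "compactin TX C2"
  shows "compactin (prod_topology TG TE)
           {z \<in> topspace (prod_topology TG TE).
              (\<lambda>(t,e). (\<beta> t e, e)) z \<in> \<beta> r ` \<iota> ` C1 \<times> \<beta> s ` \<iota> ` C2}"
proof -
  define Q where "Q = {z \<in> \<Gamma>. (\<lambda>(t,x). (\<sigma> t x, x)) z \<in> C1 \<times> C2}"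
  define \<phi> where "\<phi> = (\<lambda>(u, x). (r \<otimes>\<^bsub>G\<^esub> u \<otimes>\<^bsub>G\<^esub> inv\<^bsub>G\<^esub> s, \<beta> s (\<iota> x)))"
  have "compactin (prod_topology TX TX) (C1 \<times> C2)"
    using C1 C2 by (simp add: compactin_Times)
  with proper have "compactin (subtopology (prod_topology TG TX) \<Gamma>) Q"
    unfolding compact_preimage_map_def topspace_Gamma Q_def by blast
  moreover have "continuous_map (prod_topology TG TX) (prod_topology TG TE) \<phi>"
    unfolding \<phi>_def continuous_map_prod_top
    using r s continuous_map_two_sided_translation continuous_map_compose[OF continuous_map_iota
      continuous_map_beta_at[OF s]] by (simp add: o_def)
  ultimately have "compactin (prod_topology TG TE) (\<phi> ` Q)"
    unfolding compactin_subtopology by (metis image_compactin)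
  moreover have "\<phi> ` Q = {z \<in> topspace (prod_topology TG TE).
                   (\<lambda>(t,e). (\<beta> t e, e)) z \<in> \<beta> r ` \<iota> ` C1 \<times> \<beta> s ` \<iota> ` C2}"
    (is "_ = ?P")
  proof
    show "\<phi> ` Q \<subseteq> ?P"
    proof
      fix z assume "z \<in> \<phi> ` Q"
      then obtain u x where "(u, x) \<in> Q" "z = \<phi> (u, x)"
        by auto
      then have u: "u \<in> carrier G" and x: "x \<in> D (inv\<^bsub>G\<^esub> u)" and "\<sigma> u x \<in> C1" "x \<in> C2"
        by (auto simp: Q_def mem_Gamma_iff)
      have xX: "x \<in> topspace TX"
        using x D_subset_topspace[OF inv_closed[OF u]] by blast
      have "\<beta> (r \<otimes>\<^bsub>G\<^esub> u \<otimes>\<^bsub>G\<^esub> inv\<^bsub>G\<^esub> s) (\<beta> s (\<iota> x)) = \<beta> r (\<beta> u (\<iota> x))"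
        using r s u xX by (simp add: beta_mult iota_in_topspace m_assoc)
      also have "\<dots> = \<beta> r (\<iota> (\<sigma> u x))"
        by (simp add: iota_sigma[OF u x])
      finally show "z \<in> ?P"
        using r s u xX \<open>\<sigma> u x \<in> C1\<close> \<open>x \<in> C2\<close> \<open>z = \<phi> (u, x)\<close>
        by (auto simp: \<phi>_def topspace_TG beta_in_topspace iota_in_topspace)
    qed
  next
    show "?P \<subseteq> \<phi> ` Q"
    proof
      fix z assume "z \<in> ?P"
      then obtain t e a b where z: "z = (t, e)" and "t \<in> topspace TG" "e \<in> topspace TE"
        "a \<in> C1" "b \<in> C2" and te: "\<beta> t e = \<beta> r (\<iota> a)" and e: "e = \<beta> s (\<iota> b)"
        by auto
      define u where "u = inv\<^bsub>G\<^esub> r \<otimes>\<^bsub>G\<^esub> t \<otimes>\<^bsub>G\<^esub> s"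
      have t: "t \<in> carrier G"
        using \<open>t \<in> topspace TG\<close> by (simp add: topspace_TG)
      have u: "u \<in> carrier G"
        using r s t by (simp add: u_def)
      have ab: "a \<in> topspace TX" "b \<in> topspace TX"
        using \<open>a \<in> C1\<close> \<open>b \<in> C2\<close> C1 C2 compactin_subset_topspace by blast+
      have "\<beta> u (\<iota> b) = \<beta> (inv\<^bsub>G\<^esub> r) (\<beta> t e)"
        using r s t ab by (simp add: u_def e beta_mult iota_in_topspace m_assoc)
      also have "\<dots> = \<iota> a"
        using r ab by (simp add: te beta_inv_cancel iota_in_topspace)
      finally have "b \<in> D (inv\<^bsub>G\<^esub> u)" "\<sigma> u b = a"
        using beta_iota_eq_iota_iff[OF u ab] by simp_all
      then have "(u, b) \<in> Q"
        using u \<open>a \<in> C1\<close> \<open>b \<in> C2\<close> by (simp add: Q_def mem_Gamma_iff)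
      moreover have "\<phi> (u, b) = (t, e)"
        using r s t by (simp add: \<phi>_def u_def e m_assoc) (simp add: m_assoc [symmetric])
      ultimately show "z \<in> \<phi> ` Q"
        unfolding z by (metis image_eqI)
    qed
  qed
  ultimately show ?thesis
    by simp
qed

lemma compactin_envelope_finite_cover:
  assumes "locally_compact_space TX" "compactin TE K"
  obtains I where "finite I" "I \<subseteq> carrier G \<times> Collect (compactin TX)"
    "K \<subseteq> (\<Union>(r, C)\<in>I. \<beta> r ` \<iota> ` C)"
proof -
  define J where "J = carrier G \<times> Collect (compactin TX)"
  define nbhd where "nbhd = (\<lambda>(r, C). \<beta> r ` \<iota> ` (TX interior_of C))"
  have "K \<subseteq> \<Union>(nbhd ` J)"
  proof
    fix e assume "e \<in> K"
    then have "e \<in> topspace TE"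
      using compactin_subset_topspace[OF assms(2)] by blast
    then obtain r U C where "r \<in> carrier G" "openin TX U" "compactin TX C" "U \<subseteq> C"
      "e \<in> \<beta> r ` \<iota> ` U"
      using envelope_compact_neighbourhood[OF assms(1)] by metis
    then have "(r, C) \<in> J" "e \<in> nbhd (r, C)"
      using interior_of_maximal[of U C TX] by (auto simp: J_def nbhd_def)
    then show "e \<in> \<Union>(nbhd ` J)"
      by blast
  qed
  moreover have "\<forall>W\<in>nbhd ` J. openin TE W"
    by (auto simp: J_def nbhd_def openin_beta_image openin_iota_image)
  ultimately have "\<exists>\<W>. finite \<W> \<and> \<W> \<subseteq> nbhd ` J \<and> K \<subseteq> \<Union>\<W>"
    using assms(2) unfolding compactin_def by blast
  then obtain I where I: "I \<subseteq> J" "finite I" "K \<subseteq> \<Union>(nbhd ` I)"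
    by (metis finite_subset_image)
  show thesis
  proof (rule that)
    show "finite I" "I \<subseteq> carrier G \<times> Collect (compactin TX)"
      using I(1,2) by (simp_all add: J_def)
    have "nbhd x \<subseteq> (case x of (r, C) \<Rightarrow> \<beta> r ` \<iota> ` C)" for x
      by (cases x) (simp add: nbhd_def image_mono interior_of_subset)
    then have "\<Union>(nbhd ` I) \<subseteq> (\<Union>(r, C)\<in>I. \<beta> r ` \<iota> ` C)"
      by (intro UN_mono order_refl)
    with I(3) show "K \<subseteq> (\<Union>(r, C)\<in>I. \<beta> r ` \<iota> ` C)"
      by (rule order_trans)
  qed
qed

lemma proper_envelope_action:
  assumes "locally_compact_space TX" "Hausdorff_space TE"
    and proper: "compact_preimage_map (subtopology (prod_topology TG TX) \<Gamma>) (prod_topology TX TX)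
                   (\<lambda>(t,x). (\<sigma> t x, x))"
  shows "proper_action G TG TE \<beta>"
  unfolding proper_action_def compact_preimage_map_def
proof (intro allI impI)
  fix K assume K: "compactin (prod_topology TE TE) K"
  define preimage where
    "preimage = (\<lambda>L. {z \<in> topspace (prod_topology TG TE). (\<lambda>(t,e). (\<beta> t e, e)) z \<in> L})"
  obtain I1 where I1: "finite I1" "I1 \<subseteq> carrier G \<times> Collect (compactin TX)"
    "fst ` K \<subseteq> (\<Union>(r, C)\<in>I1. \<beta> r ` \<iota> ` C)"
    using compactin_envelope_finite_cover[OF assms(1) image_compactin[OF K continuous_map_fst]] .
  obtain I2 where I2: "finite I2" "I2 \<subseteq> carrier G \<times> Collect (compactin TX)"
    "snd ` K \<subseteq> (\<Union>(r, C)\<in>I2. \<beta> r ` \<iota> ` C)"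
    using compactin_envelope_finite_cover[OF assms(1) image_compactin[OF K continuous_map_snd]] .
  define piece where
    "piece = (\<lambda>((r, C1), (s, C2)). preimage (\<beta> r ` \<iota> ` C1 \<times> \<beta> s ` \<iota> ` C2))"
  have "compactin (prod_topology TG TE) (\<Union>(piece ` (I1 \<times> I2)))"
  proof (rule compactin_Union)
    show "finite (piece ` (I1 \<times> I2))"
      using I1(1) I2(1) by simp
    show "compactin (prod_topology TG TE) P" if "P \<in> piece ` (I1 \<times> I2)" for P
    proof -
      obtain r C1 s C2 where "(r, C1) \<in> I1" "(s, C2) \<in> I2" "P = piece ((r, C1), (s, C2))"
        using \<open>P \<in> piece ` (I1 \<times> I2)\<close> by auto
      then show ?thesis
        using I1(2) I2(2) compactin_beta_pair_preimage[OF proper, of r s C1 C2]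
        by (auto simp: piece_def preimage_def)
    qed
  qed
  moreover have "preimage K \<subseteq> \<Union>(piece ` (I1 \<times> I2))"
  proof
    fix z assume "z \<in> preimage K"
    then obtain t e where z: "z = (t, e)" "z \<in> topspace (prod_topology TG TE)" "(\<beta> t e, e) \<in> K"
      by (auto simp: preimage_def)
    then have "\<beta> t e \<in> fst ` K" "e \<in> snd ` K"
      by force+
    obtain p1 where p1: "p1 \<in> I1" "\<beta> t e \<in> (case p1 of (r, C) \<Rightarrow> \<beta> r ` \<iota> ` C)"
      using subsetD[OF I1(3) \<open>\<beta> t e \<in> fst ` K\<close>] by (rule UN_E)
    obtain p2 where p2: "p2 \<in> I2" "e \<in> (case p2 of (s, C) \<Rightarrow> \<beta> s ` \<iota> ` C)"
      using subsetD[OF I2(3) \<open>e \<in> snd ` K\<close>] by (rule UN_E)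
    have "(p1, p2) \<in> I1 \<times> I2" "z \<in> piece (p1, p2)"
      using p1 p2 z by (auto simp: piece_def preimage_def split: prod.splits)
    then show "z \<in> \<Union>(piece ` (I1 \<times> I2))"
      by (rule UN_I)
  qed
  moreover have "closedin (prod_topology TG TE) (preimage K)"
  proof -
    have "continuous_map (prod_topology TG TE) (prod_topology TE TE) (\<lambda>(t,e). (\<beta> t e, e))"
      using continuous_map_pairedI[OF continuous_map_beta continuous_map_snd]
      by (simp add: case_prod_beta')
    moreover have "closedin (prod_topology TE TE) K"
      using assms(2) K by (simp add: compactin_imp_closedin Hausdorff_space_prod_topology)
    ultimately show ?thesis
      unfolding preimage_def by (rule closedin_continuous_map_preimage)
  qed
  ultimately show "compactin (prod_topology TG TE) (preimage K)"
    by (rule closed_compactin)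
qed

lemma compact_preimage_map_if_proper_envelope_action:
  assumes "proper_action G TG TE \<beta>"
  shows "compact_preimage_map (subtopology (prod_topology TG TX) \<Gamma>) (prod_topology TX TX)
           (\<lambda>(t,x). (\<sigma> t x, x))"
  unfolding compact_preimage_map_def topspace_Gamma
proof (intro allI impI)
  fix K assume K: "compactin (prod_topology TX TX) K"
  obtain g where g: "homeomorphic_maps TX (subtopology TE (\<iota> ` topspace TX)) \<iota> g"
    using embedding_iota unfolding embedding_map_def homeomorphic_map_maps by blast
  define P where "P = {z \<in> topspace (prod_topology TG TE).
                        (\<lambda>(t,e). (\<beta> t e, e)) z \<in> (\<lambda>(a,b). (\<iota> a, \<iota> b)) ` K}"
  have "compactin (prod_topology TE TE) ((\<lambda>(a,b). (\<iota> a, \<iota> b)) ` K)"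
    using K by (rule image_compactin) (simp add: continuous_map_prod_top continuous_map_iota)
  with assms have "compactin (prod_topology TG TE) P"
    unfolding proper_action_def compact_preimage_map_def P_def by blast
  moreover have "P \<subseteq> topspace TG \<times> \<iota> ` topspace TX"
    using compactin_subset_topspace[OF K] by (force simp: P_def)
  ultimately have "compactin (prod_topology TG (subtopology TE (\<iota> ` topspace TX))) P"
    by (simp add: prod_topology_subtopology compactin_subtopology)
  moreover have "continuous_map (prod_topology TG (subtopology TE (\<iota> ` topspace TX)))
                   (prod_topology TG TX) (\<lambda>(t,e). (t, g e))"
    using g by (simp add: continuous_map_prod_top homeomorphic_maps_def)
  ultimately have "compactin (prod_topology TG TX) ((\<lambda>(t,e). (t, g e)) ` P)"
    by (rule image_compactin)
  moreover have "(\<lambda>(t,e). (t, g e)) ` P = {z \<in> \<Gamma>. (\<lambda>(t,x). (\<sigma> t x, x)) z \<in> K}"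
  proof -
    have g_iota: "g (\<iota> x) = x" if "x \<in> topspace TX" for x
      using g that unfolding homeomorphic_maps_def by blast
    have P_iff: "(t, e) \<in> P \<longleftrightarrow> (\<exists>x \<in> topspace TX. e = \<iota> x \<and> (t, x) \<in> \<Gamma> \<and> (\<sigma> t x, x) \<in> K)"
      for t e
    proof
      assume "(t, e) \<in> P"
      then obtain a b where ab: "(a, b) \<in> K" "\<beta> t e = \<iota> a" "e = \<iota> b" "t \<in> carrier G"
        by (auto simp: P_def topspace_TG)
      moreover have "a \<in> topspace TX" "b \<in> topspace TX"
        using ab(1) compactin_subset_topspace[OF K] by auto
      ultimately show "\<exists>x \<in> topspace TX. e = \<iota> x \<and> (t, x) \<in> \<Gamma> \<and> (\<sigma> t x, x) \<in> K"
        using beta_iota_eq_iota_iff[of t a b] by (auto simp: mem_Gamma_iff)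
    next
      assume "\<exists>x \<in> topspace TX. e = \<iota> x \<and> (t, x) \<in> \<Gamma> \<and> (\<sigma> t x, x) \<in> K"
      then obtain x where x: "x \<in> topspace TX" "e = \<iota> x" "(t, x) \<in> \<Gamma>" "(\<sigma> t x, x) \<in> K"
        by blast
      then have "(\<beta> t e, e) = (\<lambda>(a,b). (\<iota> a, \<iota> b)) (\<sigma> t x, x)"
        by (simp add: mem_Gamma_iff iota_sigma)
      with x show "(t, e) \<in> P"
        by (auto simp: P_def mem_Gamma_iff topspace_TG iota_in_topspace)
    qed
    show ?thesis
    proof
      show "(\<lambda>(t,e). (t, g e)) ` P \<subseteq> {z \<in> \<Gamma>. (\<lambda>(t,x). (\<sigma> t x, x)) z \<in> K}"
      proof
        fix z assume "z \<in> (\<lambda>(t,e). (t, g e)) ` P"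
        then obtain t e where "(t, e) \<in> P" "z = (t, g e)"
          by auto
        moreover from this(1) obtain x where "x \<in> topspace TX" "e = \<iota> x" "(t, x) \<in> \<Gamma>"
          "(\<sigma> t x, x) \<in> K"
          unfolding P_iff by blast
        ultimately show "z \<in> {z \<in> \<Gamma>. (\<lambda>(t,x). (\<sigma> t x, x)) z \<in> K}"
          using g_iota by simp
      qed
      show "{z \<in> \<Gamma>. (\<lambda>(t,x). (\<sigma> t x, x)) z \<in> K} \<subseteq> (\<lambda>(t,e). (t, g e)) ` P"
      proof
        fix z assume "z \<in> {z \<in> \<Gamma>. (\<lambda>(t,x). (\<sigma> t x, x)) z \<in> K}"
        then obtain t x where z: "z = (t, x)" "(t, x) \<in> \<Gamma>" "(\<sigma> t x, x) \<in> K"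
          by (cases z) auto
        then have "x \<in> topspace TX"
          using D_subset_topspace by (auto simp: mem_Gamma_iff)
        then have "(t, \<iota> x) \<in> P" "z = (\<lambda>(t,e). (t, g e)) (t, \<iota> x)"
          using z g_iota unfolding P_iff by auto
        then show "z \<in> (\<lambda>(t,e). (t, g e)) ` P"
          by (rule rev_image_eqI)
      qed
    qed
  qed
  ultimately show "compactin (subtopology (prod_topology TG TX) \<Gamma>)
                     {z \<in> \<Gamma>. (\<lambda>(t,x). (\<sigma> t x, x)) z \<in> K}"
    by (simp add: compactin_subtopology)
qed

lemma proper_envelope_iff_compact_preimage_map:
  assumes "Hausdorff_space TG" "locally_compact_space TX" "Hausdorff_space TX"
  shows "locally_compact_space TE \<and> Hausdorff_space TE \<and> proper_action G TG TE \<beta> \<longleftrightarrow>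
         compact_preimage_map (subtopology (prod_topology TG TX) \<Gamma>) (prod_topology TX TX)
           (\<lambda>(t,x). (\<sigma> t x, x))"
proof
  assume "locally_compact_space TE \<and> Hausdorff_space TE \<and> proper_action G TG TE \<beta>"
  then show "compact_preimage_map (subtopology (prod_topology TG TX) \<Gamma>) (prod_topology TX TX)
               (\<lambda>(t,x). (\<sigma> t x, x))"
    using compact_preimage_map_if_proper_envelope_action by blast
next
  assume proper: "compact_preimage_map (subtopology (prod_topology TG TX) \<Gamma>) (prod_topology TX TX)
                    (\<lambda>(t,x). (\<sigma> t x, x))"
  have "Hausdorff_space TE"
    using closedin_sigma_graph[OF assms proper] by (rule Hausdorff_envelope)
  with assms(2) proper show "locally_compact_space TE \<and> Hausdorff_space TE \<and> proper_action G TG TE \<beta>"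
    using locally_compact_envelope proper_envelope_action by blast
qed

end

theorem proposition1p10:
  fixes G :: "('g,'b) monoid_scheme" and TG :: "'g topology"
    and TX :: "'x topology" and D :: "'g \<Rightarrow> 'x set" and \<sigma> :: "'g \<Rightarrow> 'x \<Rightarrow> 'x"
    and TE :: "'e topology" and \<beta> :: "'g \<Rightarrow> 'e \<Rightarrow> 'e" and \<iota> :: "'x \<Rightarrow> 'e"
  assumes "topological_group G TG" and "locally_compact_space TG" and "Hausdorff_space TG"
    and "locally_compact_space TX" and "Hausdorff_space TX"
    and "partial_action G TG TX D \<sigma>"
    and "enveloping_action G TG TX D \<sigma> TE \<beta> \<iota>"
  shows "((locally_compact_space TE \<and> Hausdorff_space TE \<and> proper_action G TG TE \<beta>)
           \<longleftrightarrow>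
          (\<forall>F :: ('g \<times> 'x) filter.
             F \<noteq> bot \<and> eventually (\<lambda>z. z \<in> Gamma_pa G D) F \<and>
             (\<exists>p. limitin (prod_topology TX TX) (\<lambda>(t,x). (\<sigma> t x, x)) p F)
             \<longrightarrow> (\<exists>F'. F' \<noteq> bot \<and> F' \<le> F \<and>
                   (\<exists>q. limitin (subtopology (prod_topology TG TX) (Gamma_pa G D)) (\<lambda>z. z) q F'))))
       \<and>
         ((\<forall>F :: ('g \<times> 'x) filter.
             F \<noteq> bot \<and> eventually (\<lambda>z. z \<in> Gamma_pa G D) F \<and>
             (\<exists>p. limitin (prod_topology TX TX) (\<lambda>(t,x). (\<sigma> t x, x)) p F)
             \<longrightarrow> (\<exists>F'. F' \<noteq> bot \<and> F' \<le> F \<and>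
                   (\<exists>q. limitin (subtopology (prod_topology TG TX) (Gamma_pa G D)) (\<lambda>z. z) q F')))
           \<longleftrightarrow>
          compact_preimage_map (subtopology (prod_topology TG TX) (Gamma_pa G D))
            (prod_topology TX TX) (\<lambda>(t,x). (\<sigma> t x, x)))"
proof -
  interpret envelope G TG TX D \<sigma> TE \<beta> \<iota>
    using assms(1,6,7) by unfold_locales
  have "filter_proper_map (subtopology (prod_topology TG TX) (Gamma_pa G D)) (prod_topology TX TX)
          (\<lambda>(t,x). (\<sigma> t x, x))
        \<longleftrightarrow> compact_preimage_map (subtopology (prod_topology TG TX) (Gamma_pa G D))
              (prod_topology TX TX) (\<lambda>(t,x). (\<sigma> t x, x))"
    using assms(4,5) continuous_map_sigma_pair
    by (intro filter_proper_map_iff_compact_preimage_map)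
      (simp_all add: locally_compact_space_prod_topology Hausdorff_space_prod_topology)
  with proper_envelope_iff_compact_preimage_map[OF assms(3-5)] show ?thesis
    unfolding filter_proper_map_def topspace_Gamma by argo
qed

end
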